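(* Let $\kappa$ be an uncountable cardinal and let $X$, $Y$ be non-trivial Banach spaces. If $X$ is $\mathrm{ASQ}_{<\kappa}$ (respectively, $\mathrm{SQ}_{<\kappa}$), then the injective tensor product $X\widehat{\otimes}_\varepsilon Y$ is $\mathrm{ASQ}_{<\kappa}$ (respectively, $\mathrm{SQ}_{<\kappa}$).
   Context: $X\widehat{\otimes}_\varepsilon Y$ is the closure, in the operator norm, of the finite-rank operators from $Y^*$ to $X$. A Banach space $Z$ is $\mathrm{ASQ}_{<\kappa}$ if for every set $A\subset S_Z$ with $|A|<\kappa$ and every $\varepsilon>0$ there exists $y\in S_Z$ with $\|x\pm y\|\le 1+\varepsilon$ for all $x\in A$; $Z$ is $\mathrm{SQ}_{<\kappa}$ if for every such $A$ there exists $y\in S_Z$ with $\|x\pm y\|\le 1$ for all $x\in A$. *)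

theory Defs
  imports "HOL-Analysis.Analysis"
begin

text \<open>Cardinals are represented as in HOL's BNF cardinal library: a cardinal is a
  relation kappa with Card_order kappa; "|A| < kappa" is (card_of A, kappa) in ordLess.\<close>

text \<open>ASQ_{<kappa} for a (closed) linear subspace Z of a real normed space,
  with the norm inherited from the ambient space.\<close>
definition ASQ_lt :: "'c rel \<Rightarrow> 'a::real_normed_vector set \<Rightarrow> bool" where
  "ASQ_lt \<kappa> Z \<longleftrightarrow>
     (\<forall>A. A \<subseteq> Z \<inter> sphere 0 1 \<longrightarrow> (card_of A, \<kappa>) \<in> ordLess \<longrightarrow>
        (\<forall>\<epsilon>>0. \<exists>y\<in>Z \<inter> sphere 0 1. \<forall>x\<in>A. norm (x + y) \<le> 1 + \<epsilon> \<and> norm (x - y) \<le> 1 + \<epsilon>))"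

definition SQ_lt :: "'c rel \<Rightarrow> 'a::real_normed_vector set \<Rightarrow> bool" where
  "SQ_lt \<kappa> Z \<longleftrightarrow>
     (\<forall>A. A \<subseteq> Z \<inter> sphere 0 1 \<longrightarrow> (card_of A, \<kappa>) \<in> ordLess \<longrightarrow>
        (\<exists>y\<in>Z \<inter> sphere 0 1. \<forall>x\<in>A. norm (x + y) \<le> 1 \<and> norm (x - y) \<le> 1))"

definition finite_rank :: "('a::real_normed_vector \<Rightarrow>\<^sub>L 'b::real_normed_vector) \<Rightarrow> bool" where
  "finite_rank T \<longleftrightarrow> (\<exists>F. finite F \<and> range (blinfun_apply T) \<subseteq> span F)"

text \<open>Injective tensor product of X and Y: the operator-norm closure of the finite-rank
  operators from the dual Y* = ('b \<Rightarrow>L real) to X.\<close>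
definition inj_tensor :: "('a::real_normed_vector) itself \<Rightarrow> ('b::real_normed_vector) itself
    \<Rightarrow> (('b \<Rightarrow>\<^sub>L real) \<Rightarrow>\<^sub>L 'a) set" where
  "inj_tensor _ _ = closure {T. finite_rank T}"

end

theory Submission
  imports Defs
begin

text \<open>Each operator in the closure of the finite-rank operators has separable range, so for a
  set A of fewer than \<kappa> such operators (\<kappa> uncountable) all their ranges lie in the closure
  of a set of fewer than \<kappa> vectors. Applying the hypothesis on X to the normalisations of these
  vectors gives a unit vector x0 with norm (u \<plusminus> x0) \<le> c on the closure, hence, by
  homogeneity, norm (T f + t x0) \<le> c for all T \<in> A, norm f \<le> 1 and \<bar>t\<bar> \<le> 1.
  For a unit vector y0 of Y the elementary tensor x0 \<otimes> y0 maps f to f(y0) x0, so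
  norm (T \<plusminus> x0 \<otimes> y0) \<le> c; by Hahn-Banach it has norm one.\<close>

section \<open>The real Hahn-Banach theorem\<close>

text \<open>A pair (x, a) \<in> G records the value a at x of a linear functional defined on a subspace
  and dominated by the norm; with graphs, Zorn's lemma only needs unions of chains.\<close>

definition dominated_graph :: "('a::real_normed_vector \<times> real) set \<Rightarrow> bool" where
  "dominated_graph G \<longleftrightarrow> subspace G \<and> (\<forall>(x, a) \<in> G. a \<le> norm x)"

lemma dominated_graphD:
  assumes "dominated_graph G"
  shows dominated_graph_subspace: "subspace G"
    and dominated_graph_le_norm: "(x, a) \<in> G \<Longrightarrow> a \<le> norm x"
  using assms unfolding dominated_graph_def by auto

lemma dominated_graph_unique:
  assumes G: "dominated_graph G" and "(x, a) \<in> G" "(x, b) \<in> G"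
  shows "a = b"
proof -
  have "(x, a) - (x, b) \<in> G" "(x, b) - (x, a) \<in> G"
    using subspace_diff[OF dominated_graph_subspace[OF G]] assms(2,3) by blast+
  then have "a - b \<le> 0" "b - a \<le> 0"
    using dominated_graph_le_norm[OF G, of 0 "a - b"] dominated_graph_le_norm[OF G, of 0 "b - a"]
    by auto
  then show ?thesis by simp
qed

lemma dominated_graph_extension_value:
  assumes G: "dominated_graph G"
  shows "\<exists>r. \<forall>(x, a) \<in> G. a - norm (x - z) \<le> r \<and> r \<le> norm (x + z) - a"
proof -
  have sep: "a - norm (x - z) \<le> norm (y + z) - b" if "(x, a) \<in> G" "(y, b) \<in> G" for x a y b
  proof -
    have "a + b \<le> norm (x + y)"
      using dominated_graph_le_norm[OF G] subspace_add[OF dominated_graph_subspace[OF G] that]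
      by simp
    also have "\<dots> \<le> norm (x - z) + norm (y + z)"
      using norm_triangle_ineq[of "x - z" "y + z"] by simp
    finally show ?thesis by simp
  qed
  define S where "S = {a - norm (x - z) | x a. (x, a) \<in> G}"
  have "(0, 0) \<in> G"
    using subspace_0[OF dominated_graph_subspace[OF G]] by (simp add: zero_prod_def)
  then have S_ne: "S \<noteq> {}" and S_bdd: "bdd_above S"
    unfolding S_def bdd_above_def using sep by blast+
  have "a - norm (x - z) \<le> Sup S \<and> Sup S \<le> norm (x + z) - a" if "(x, a) \<in> G" for x a
  proof
    show "a - norm (x - z) \<le> Sup S"
      using that by (intro cSup_upper[OF _ S_bdd]) (auto simp: S_def)
    show "Sup S \<le> norm (x + z) - a"
      using that sep by (intro cSup_least[OF S_ne]) (auto simp: S_def)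
  qed
  then show ?thesis by blast
qed

lemma dominated_graph_extension_le_norm:
  assumes G: "dominated_graph G"
    and r: "\<And>x a. (x, a) \<in> G \<Longrightarrow> a - norm (x - z) \<le> r \<and> r \<le> norm (x + z) - a"
    and "(x, a) \<in> G"
  shows "a + t * r \<le> norm (x + t *\<^sub>R z)"
proof -
  have scaled: "a - norm (x - s *\<^sub>R z) \<le> s * r \<and> s * r \<le> norm (x + s *\<^sub>R z) - a"
    if "s > 0" for s
  proof -
    have "(inverse s *\<^sub>R x, inverse s * a) \<in> G"
      using subspace_scale[OF dominated_graph_subspace[OF G] \<open>(x, a) \<in> G\<close>, of "inverse s"]
      by simp
    then have bounds: "inverse s * a - norm (inverse s *\<^sub>R x - z) \<le> r"
      "r \<le> norm (inverse s *\<^sub>R x + z) - inverse s * a"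
      using r by blast+
    have "inverse s *\<^sub>R x - z = inverse s *\<^sub>R (x - s *\<^sub>R z)"
      "inverse s *\<^sub>R x + z = inverse s *\<^sub>R (x + s *\<^sub>R z)"
      using that by (simp_all add: scaleR_diff_right scaleR_add_right)
    then have "inverse s * a - inverse s * norm (x - s *\<^sub>R z) \<le> r"
      "r \<le> inverse s * norm (x + s *\<^sub>R z) - inverse s * a"
      using bounds that by simp_all
    then show ?thesis
      using that by (simp add: field_simps)
  qed
  show ?thesis
  proof (cases t "0::real" rule: linorder_cases)
    case less
    then show ?thesis using scaled[of "- t"] by simp
  next
    case equal
    then show ?thesis using dominated_graph_le_norm[OF G \<open>(x, a) \<in> G\<close>] by simp
  next
    case greater
    then show ?thesis using scaled[of t] by simp
  qed
qed

lemma dominated_graph_extend: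
  assumes G: "dominated_graph G"
  shows "\<exists>G' r. dominated_graph G' \<and> G \<subseteq> G' \<and> (z, r) \<in> G'"
proof -
  obtain r where r: "\<And>x a. (x, a) \<in> G \<Longrightarrow> a - norm (x - z) \<le> r \<and> r \<le> norm (x + z) - a"
    using dominated_graph_extension_value[OF G, of z] by blast
  define G' where "G' = {p + q | p q. p \<in> G \<and> q \<in> span {(z, r)}}"
  have "subspace G'"
    unfolding G'_def by (rule subspace_sums[OF dominated_graph_subspace[OF G] subspace_span])
  moreover have "b \<le> norm y" if "(y, b) \<in> G'" for y b
  proof -
    obtain x a t where "(x, a) \<in> G" "y = x + t *\<^sub>R z" "b = a + t * r"
      using \<open>(y, b) \<in> G'\<close> unfolding G'_def span_singleton by auto
    then show ?thesis
      using dominated_graph_extension_le_norm[OF G r] by simp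
  qed
  moreover have "G \<subseteq> G'"
  proof
    fix p assume "p \<in> G"
    moreover have "p = p + 0" by simp
    ultimately show "p \<in> G'"
      unfolding G'_def using span_zero by blast
  qed
  moreover have "(z, r) \<in> G'"
  proof -
    have "(z, r) = 0 + (z, r)" by simp
    then show ?thesis
      unfolding G'_def using subspace_0[OF dominated_graph_subspace[OF G]]
        span_base[of "(z, r)" "{(z, r)}"] by blast
  qed
  ultimately show ?thesis
    unfolding dominated_graph_def by blast
qed

lemma dominated_graph_Union_chain:
  assumes "\<C> \<noteq> {}" and dom: "\<And>G. G \<in> \<C> \<Longrightarrow> dominated_graph G"
    and chain: "\<And>G H. G \<in> \<C> \<Longrightarrow> H \<in> \<C> \<Longrightarrow> G \<subseteq> H \<or> H \<subseteq> G"
  shows "dominated_graph (\<Union>\<C>)"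
proof -
  have "subspace (\<Union>\<C>)"
    unfolding subspace_def
  proof (intro conjI ballI allI)
    obtain G where "G \<in> \<C>" using assms(1) by blast
    then show "0 \<in> \<Union>\<C>"
      using dom dominated_graph_subspace subspace_0 by blast
  next
    fix p q assume "p \<in> \<Union>\<C>" "q \<in> \<Union>\<C>"
    then obtain G H where GH: "G \<in> \<C>" "H \<in> \<C>" "p \<in> G" "q \<in> H" by blast
    then obtain K where "K \<in> \<C>" "p \<in> K" "q \<in> K"
      using chain[OF GH(1,2)] by blast
    then show "p + q \<in> \<Union>\<C>"
      using dom dominated_graph_subspace subspace_add by blast
  next
    fix c p assume "p \<in> \<Union>\<C>"
    then show "c *\<^sub>R p \<in> \<Union>\<C>"
      using dom dominated_graph_subspace subspace_scale by blast
  qed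
  moreover have "a \<le> norm x" if "(x, a) \<in> \<Union>\<C>" for x a
    using that dom dominated_graph_le_norm by blast
  ultimately show ?thesis
    unfolding dominated_graph_def by blast
qed

lemma dominated_graph_extend_total:
  assumes "dominated_graph G"
  shows "\<exists>M. dominated_graph M \<and> G \<subseteq> M \<and> (\<forall>x. \<exists>a. (x, a) \<in> M)"
proof -
  define \<A> where "\<A> = {H. dominated_graph H \<and> G \<subseteq> H}"
  have "\<A> \<noteq> {}"
    using assms unfolding \<A>_def by blast
  moreover have "\<Union>\<C> \<in> \<A>" if "\<C> \<noteq> {}" "subset.chain \<A> \<C>" for \<C>
  proof -
    have "dominated_graph (\<Union>\<C>)"
      using that unfolding \<A>_def subset.chain_def by (intro dominated_graph_Union_chain) blast+
    moreover have "G \<subseteq> \<Union>\<C>"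
      using that unfolding \<A>_def subset.chain_def by blast
    ultimately show ?thesis
      unfolding \<A>_def by blast
  qed
  ultimately obtain M where "M \<in> \<A>" and maximal: "\<And>H. H \<in> \<A> \<Longrightarrow> M \<subseteq> H \<Longrightarrow> H = M"
    using subset_Zorn_nonempty[of \<A>] by blast
  then have M: "dominated_graph M" "G \<subseteq> M"
    unfolding \<A>_def by auto
  have "\<exists>a. (x, a) \<in> M" for x
  proof -
    obtain H r where "dominated_graph H" "M \<subseteq> H" "(x, r) \<in> H"
      using dominated_graph_extend[OF M(1)] by blast
    then have "H = M"
      using M(2) maximal unfolding \<A>_def by blast
    then show ?thesis
      using \<open>(x, r) \<in> H\<close> by blast
  qed
  then show ?thesis
    using M by blast
qed

theorem hahn_banach_dominated_graph:
  assumes "dominated_graph G"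
  shows "\<exists>f :: 'a::real_normed_vector \<Rightarrow>\<^sub>L real.
           norm f \<le> 1 \<and> (\<forall>(x, a) \<in> G. blinfun_apply f x = a)"
proof -
  obtain M where M: "dominated_graph M" "G \<subseteq> M" and total: "\<And>x. \<exists>a. (x, a) \<in> M"
    using dominated_graph_extend_total[OF assms] by blast
  define f where "f x = (THE a. (x, a) \<in> M)" for x
  have f: "(x, a) \<in> M \<longleftrightarrow> f x = a" for x a
  proof -
    obtain b where "(x, b) \<in> M"
      using total by blast
    then have "f x = b"
      unfolding f_def using dominated_graph_unique[OF M(1)] by blast
    then show ?thesis
      using \<open>(x, b) \<in> M\<close> dominated_graph_unique[OF M(1)] by blast
  qed
  have add: "f (x + y) = f x + f y" for x y
    using subspace_add[OF dominated_graph_subspace[OF M(1)], of "(x, f x)" "(y, f y)"] f by simp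
  have scale: "f (c *\<^sub>R x) = c * f x" for c x
    using subspace_scale[OF dominated_graph_subspace[OF M(1)], of "(x, f x)" c] f by simp
  have le_norm: "f x \<le> norm x" for x
    using dominated_graph_le_norm[OF M(1)] f by blast
  have abs_le: "\<bar>f x\<bar> \<le> norm x" for x
    using le_norm[of x] le_norm[of "- x"] scale[of "-1" x] by simp
  have "bounded_linear f"
    by (rule bounded_linear_intro[where K = 1]) (use add scale abs_le in auto)
  then have "norm (Blinfun f) \<le> 1" "\<forall>(x, a) \<in> G. Blinfun f x = a"
    using abs_le M(2) f by (auto simp: bounded_linear_Blinfun_apply intro!: norm_blinfun_bound)
  then show ?thesis by blast
qed

corollary exists_norming_functional:
  "\<exists>f :: 'a::real_normed_vector \<Rightarrow>\<^sub>L real. norm f \<le> 1 \<and> blinfun_apply f y = norm y"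
proof -
  have "\<forall>(x, a) \<in> span {(y, norm y)}. a \<le> norm x"
    unfolding span_singleton by (auto simp: mult_right_mono)
  then have "dominated_graph (span {(y, norm y)})"
    unfolding dominated_graph_def using subspace_span by blast
  then obtain f :: "'a \<Rightarrow>\<^sub>L real"
    where "norm f \<le> 1" and f: "\<forall>(x, a) \<in> span {(y, norm y)}. f x = a"
    using hahn_banach_dominated_graph by blast
  moreover have "f y = norm y"
    using bspec[OF f span_base[of "(y, norm y)"]] by simp
  ultimately show ?thesis by blast
qed

section \<open>Squares in the injective tensor product\<close>

definition elementary_tensor ::
    "'a::real_normed_vector \<Rightarrow> 'b::real_normed_vector \<Rightarrow> ('b \<Rightarrow>\<^sub>L real) \<Rightarrow>\<^sub>L 'a" where
  "elementary_tensor x y = Blinfun (\<lambda>f. blinfun_apply f y *\<^sub>R x)"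

lemma elementary_tensor_apply [simp]:
  "blinfun_apply (elementary_tensor x y) f = blinfun_apply f y *\<^sub>R x"
proof -
  have "bounded_linear (\<lambda>f :: 'b \<Rightarrow>\<^sub>L real. blinfun_apply f y *\<^sub>R x)"
    using bounded_linear_compose[OF bounded_linear_scaleR_left blinfun.bounded_linear_left] .
  then show ?thesis
    unfolding elementary_tensor_def by (simp add: bounded_linear_Blinfun_apply)
qed

lemma elementary_tensor_in_inj_tensor:
  "elementary_tensor x y \<in> inj_tensor TYPE('a::real_normed_vector) TYPE('b::real_normed_vector)"
proof -
  have "range (blinfun_apply (elementary_tensor x y)) \<subseteq> span {x}"
  proof
    fix v assume "v \<in> range (blinfun_apply (elementary_tensor x y))"
    then obtain f where "v = blinfun_apply f y *\<^sub>R x"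
      by auto
    then show "v \<in> span {x}"
      by (simp add: span_base span_scale)
  qed
  then have "finite_rank (elementary_tensor x y)"
    unfolding finite_rank_def by blast
  then show ?thesis
    unfolding inj_tensor_def using closure_subset by blast
qed

lemma norm_elementary_tensor:
  fixes x :: "'a::real_normed_vector" and y :: "'b::real_normed_vector"
  shows "norm (elementary_tensor x y) = norm x * norm y"
proof (rule antisym)
  show "norm (elementary_tensor x y) \<le> norm x * norm y"
  proof (rule norm_blinfun_bound)
    fix f :: "'b \<Rightarrow>\<^sub>L real"
    have "norm (f y *\<^sub>R x) \<le> norm f * norm y * norm x"
      using norm_blinfun[of f y] by (simp add: mult_right_mono)
    then show "norm (elementary_tensor x y f) \<le> norm x * norm y * norm f"
      by (simp add: mult_ac)
  qed simp
  obtain \<phi> :: "'b \<Rightarrow>\<^sub>L real" where \<phi>: "norm \<phi> \<le> 1" "\<phi> y = norm y"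
    using exists_norming_functional by blast
  have "norm x * norm y = norm (elementary_tensor x y \<phi>)"
    using \<phi>(2) by simp
  also have "\<dots> \<le> norm (elementary_tensor x y) * norm \<phi>"
    by (rule norm_blinfun)
  also have "\<dots> \<le> norm (elementary_tensor x y)"
    using \<phi>(1) by (simp add: mult_left_le)
  finally show "norm x * norm y \<le> norm (elementary_tensor x y)" .
qed

lemma span_subset_closure_countable:
  fixes F :: "'a::real_normed_vector set"
  assumes "finite F"
  shows "\<exists>C. countable C \<and> span F \<subseteq> closure C"
proof -
  define C where "C = (\<lambda>q. \<Sum>x\<in>F. q x *\<^sub>R x) ` (F \<rightarrow>\<^sub>E \<rat>)"
  have "countable C"
    unfolding C_def using assms countable_rat by (intro countable_image countable_PiE)
  moreover have "v \<in> closure C" if "v \<in> span F" for v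
  proof -
    obtain r where v: "v = (\<Sum>x\<in>F. r x *\<^sub>R x)"
      using \<open>v \<in> span F\<close> span_finite[OF assms] by auto
    have "\<exists>q. (\<forall>n. q n \<in> \<rat>) \<and> q \<longlonglongrightarrow> r x" for x
      using closure_sequential[of "r x" \<rat>] by (simp add: Rats_closure_real)
    then obtain q where q: "\<And>x n. q x n \<in> \<rat>" "\<And>x. q x \<longlonglongrightarrow> r x"
      by metis
    have lim: "(\<lambda>n. \<Sum>x\<in>F. q x n *\<^sub>R x) \<longlonglongrightarrow> v"
      unfolding v by (intro tendsto_intros q(2))
    have mem: "(\<Sum>x\<in>F. q x n *\<^sub>R x) \<in> C" for n
    proof -
      have "(\<Sum>x\<in>F. q x n *\<^sub>R x) = (\<Sum>x\<in>F. restrict (\<lambda>x. q x n) F x *\<^sub>R x)"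
        by simp
      moreover have "restrict (\<lambda>x. q x n) F \<in> F \<rightarrow>\<^sub>E \<rat>"
        using q(1) by simp
      ultimately show ?thesis
        unfolding C_def by blast
    qed
    show ?thesis
      unfolding closure_sequential using lim mem
      by (intro exI[of _ "\<lambda>n. \<Sum>x\<in>F. q x n *\<^sub>R x"]) simp
  qed
  ultimately show ?thesis by blast
qed

lemma closure_finite_rank_separable_range:
  fixes T :: "'a::real_normed_vector \<Rightarrow>\<^sub>L 'b::real_normed_vector"
  assumes "T \<in> closure {T. finite_rank T}"
  shows "\<exists>C. countable C \<and> range T \<subseteq> closure C"
proof -
  obtain S where S: "\<And>n. finite_rank (S n)" "S \<longlonglongrightarrow> T"
    using assms closure_sequential[of T] by auto
  have "\<exists>C. countable C \<and> range (S n) \<subseteq> closure C" for n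
  proof -
    obtain F where "finite F" "range (S n) \<subseteq> span F"
      using S(1) unfolding finite_rank_def by blast
    moreover obtain C where "countable C" "span F \<subseteq> closure C"
      using span_subset_closure_countable[OF \<open>finite F\<close>] by blast
    ultimately show ?thesis by blast
  qed
  then obtain C where C: "\<And>n. countable (C n)" "\<And>n. range (S n) \<subseteq> closure (C n)"
    by metis
  have "T f \<in> closure (\<Union>n. C n)" for f
  proof (rule closed_sequentially[OF closed_closure])
    show "S n f \<in> closure (\<Union>n. C n)" for n
      using C(2)[of n] closure_mono[of "C n" "\<Union>n. C n"] by blast
    show "(\<lambda>n. S n f) \<longlonglongrightarrow> T f"
      using S(2) by (intro blinfun.tendsto tendsto_const)
  qed
  moreover have "countable (\<Union>n. C n)"
    using C(1) by (intro countable_UN) auto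
  ultimately show ?thesis by blast
qed

lemma countable_card_of_ordLeq_natLeq:
  assumes "countable S"
  shows "(card_of S, natLeq) \<in> ordLeq"
proof -
  obtain g :: "_ \<Rightarrow> nat" where "inj_on g S"
    using assms unfolding countable_def by blast
  then have "(card_of S, card_of (UNIV :: nat set)) \<in> ordLeq"
    using card_of_ordLeq by blast
  then show ?thesis
    using card_of_nat ordLeq_ordIso_trans by blast
qed

lemma card_of_UN_countable_ordLess:
  assumes "(natLeq, \<kappa>) \<in> ordLess" "(card_of I, \<kappa>) \<in> ordLess"
    and "\<And>i. i \<in> I \<Longrightarrow> countable (C i)"
  shows "(card_of (\<Union>i\<in>I. C i), \<kappa>) \<in> ordLess"
proof (cases "finite I")
  case True
  then have "countable (\<Union>i\<in>I. C i)"
    using assms(3) by (intro countable_UN countable_finite[OF True]) auto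
  then show ?thesis
    using countable_card_of_ordLeq_natLeq assms(1) ordLeq_ordLess_trans by blast
next
  case False
  have "(card_of (C i), card_of I) \<in> ordLeq" if "i \<in> I" for i
    using countable_card_of_ordLeq_natLeq[OF assms(3)[OF that]]
      infinite_iff_natLeq_ordLeq[of I] False ordLeq_transitive by blast
  then have "(card_of (\<Union>i\<in>I. C i), card_of I) \<in> ordLeq"
    using card_of_UNION_ordLeq_infinite[OF False ordLeq_refl[OF card_of_Card_order]] by blast
  then show ?thesis
    using assms(2) ordLeq_ordLess_trans by blast
qed

lemma sgn_in_closure_image:
  fixes u :: "'a::real_normed_vector"
  assumes "u \<in> closure U" "u \<noteq> 0"
  shows "sgn u \<in> closure (sgn ` (U - {0}))"
proof -
  obtain s where s: "\<And>n. s n \<in> U" "s \<longlonglongrightarrow> u"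
    using assms(1) closure_sequential[of u U] by auto
  have "eventually (\<lambda>n. 0 < norm (s n)) sequentially"
    using order_tendstoD(1)[OF tendsto_norm[OF s(2)], of 0] assms(2) by simp
  then have "eventually (\<lambda>n. sgn (s n) \<in> closure (sgn ` (U - {0}))) sequentially"
    by (rule eventually_mono) (use s(1) closure_subset in fastforce)
  moreover have "(\<lambda>n. sgn (s n)) \<longlonglongrightarrow> sgn u"
    using s(2) assms(2) by (rule tendsto_sgn)
  ultimately show ?thesis
    by (rule Lim_in_closed_set[OF closed_closure _ trivial_limit_sequentially])
qed

lemma norm_scaleR_add_scaleR_le:
  fixes u x :: "'a::real_normed_vector"
  assumes "norm (u + x) \<le> c" "norm (u - x) \<le> c" "\<bar>s\<bar> \<le> 1" "\<bar>t\<bar> \<le> 1"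
  shows "norm (s *\<^sub>R u + t *\<^sub>R x) \<le> c"
proof -
  have "0 \<le> c"
    using assms(1) norm_ge_zero order_trans by blast
  have "(a + b) *\<^sub>R u + (a - b) *\<^sub>R x = a *\<^sub>R (u + x) + b *\<^sub>R (u - x)" for a b
    by (simp add: algebra_simps)
  from this[of "(s + t) / 2" "(s - t) / 2"]
  have "s *\<^sub>R u + t *\<^sub>R x = ((s + t) / 2) *\<^sub>R (u + x) + ((s - t) / 2) *\<^sub>R (u - x)"
    by (simp add: field_simps)
  then have "norm (s *\<^sub>R u + t *\<^sub>R x) \<le> \<bar>s + t\<bar> / 2 * norm (u + x) + \<bar>s - t\<bar> / 2 * norm (u - x)"
    using norm_triangle_ineq[of "((s + t) / 2) *\<^sub>R (u + x)" "((s - t) / 2) *\<^sub>R (u - x)"] by simp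
  also have "\<dots> \<le> \<bar>s + t\<bar> / 2 * c + \<bar>s - t\<bar> / 2 * c"
    using assms(1,2) by (intro add_mono mult_left_mono) auto
  also have "\<dots> = (\<bar>s + t\<bar> + \<bar>s - t\<bar>) / 2 * c"
    by (simp add: algebra_simps)
  also have "\<dots> \<le> 1 * c"
    using assms(3,4) \<open>0 \<le> c\<close> by (intro mult_right_mono) (auto simp: abs_if)
  finally show ?thesis by simp
qed

lemma norm_blinfun_bound_unit:
  fixes S :: "'a::real_normed_vector \<Rightarrow>\<^sub>L 'b::real_normed_vector"
  assumes "0 \<le> c" "\<And>x. norm x \<le> 1 \<Longrightarrow> norm (blinfun_apply S x) \<le> c"
  shows "norm S \<le> c"
proof (rule norm_blinfun_bound[OF assms(1)])
  fix x
  show "norm (blinfun_apply S x) \<le> c * norm x"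
  proof (cases "x = 0")
    case False
    have "norm (blinfun_apply S (x /\<^sub>R norm x)) \<le> c"
      using assms(2) False by simp
    moreover have "blinfun_apply S x = norm x *\<^sub>R blinfun_apply S (x /\<^sub>R norm x)"
      using False by (simp add: blinfun.scaleR_right)
    ultimately show ?thesis
      using False by (simp add: mult.commute mult_left_mono)
  qed simp
qed

lemma norm_add_scaleR_le_closure:
  fixes x0 :: "'a::real_normed_vector"
  assumes sq: "\<forall>d\<in>sgn ` (U - {0}). norm (d + x0) \<le> c \<and> norm (d - x0) \<le> c"
    and "norm x0 = 1" "c \<ge> 1" "u \<in> closure U" "norm u \<le> 1" "\<bar>t\<bar> \<le> 1"
  shows "norm (u + t *\<^sub>R x0) \<le> c"
proof (cases "u = 0")
  case True
  then show ?thesis using assms(2,3,6) by simp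
next
  case False
  have "closure (sgn ` (U - {0})) \<subseteq> {d. norm (d + x0) \<le> c \<and> norm (d - x0) \<le> c}"
    using sq by (intro closure_minimal)
      (auto intro!: closed_Collect_conj closed_Collect_le continuous_intros)
  then have "norm (sgn u + x0) \<le> c" "norm (sgn u - x0) \<le> c"
    using sgn_in_closure_image[OF \<open>u \<in> closure U\<close> False] by auto
  then have "norm (norm u *\<^sub>R sgn u + t *\<^sub>R x0) \<le> c"
    using assms(5,6) by (intro norm_scaleR_add_scaleR_le) auto
  then show ?thesis
    using False by (simp add: sgn_div_norm)
qed

definition SQ_const_lt :: "'c rel \<Rightarrow> real \<Rightarrow> 'a::real_normed_vector set \<Rightarrow> bool" where
  "SQ_const_lt \<kappa> c Z \<longleftrightarrow>
     (\<forall>A. A \<subseteq> Z \<inter> sphere 0 1 \<longrightarrow> (card_of A, \<kappa>) \<in> ordLess \<longrightarrow>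
        (\<exists>y\<in>Z \<inter> sphere 0 1. \<forall>x\<in>A. norm (x + y) \<le> c \<and> norm (x - y) \<le> c))"

lemma ASQ_lt_iff_SQ_const_lt: "ASQ_lt \<kappa> Z \<longleftrightarrow> (\<forall>\<epsilon>>0. SQ_const_lt \<kappa> (1 + \<epsilon>) Z)"
  unfolding ASQ_lt_def SQ_const_lt_def by blast

lemma SQ_lt_iff_SQ_const_lt: "SQ_lt \<kappa> Z \<longleftrightarrow> SQ_const_lt \<kappa> 1 Z"
  unfolding SQ_lt_def SQ_const_lt_def by blast

lemma SQ_const_lt_square_vector_ranges:
  fixes A :: "('x::real_normed_vector \<Rightarrow>\<^sub>L 'a::real_normed_vector) set"
  assumes \<kappa>: "(natLeq, \<kappa>) \<in> ordLess" and sq: "SQ_const_lt \<kappa> c (UNIV :: 'a set)" and "c \<ge> 1"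
    and A: "A \<subseteq> closure {T. finite_rank T}" "\<And>T. T \<in> A \<Longrightarrow> norm T \<le> 1"
      "(card_of A, \<kappa>) \<in> ordLess"
  shows "\<exists>x0\<in>sphere 0 1. \<forall>T\<in>A. \<forall>f t. norm f \<le> 1 \<longrightarrow> \<bar>t\<bar> \<le> 1 \<longrightarrow>
           norm (blinfun_apply T f + t *\<^sub>R x0) \<le> c"
proof -
  have "\<forall>T\<in>A. \<exists>C. countable C \<and> range (blinfun_apply T) \<subseteq> closure C"
    using A(1) closure_finite_rank_separable_range by blast
  then obtain C where C: "\<And>T. T \<in> A \<Longrightarrow> countable (C T)"
    "\<And>T. T \<in> A \<Longrightarrow> range (blinfun_apply T) \<subseteq> closure (C T)"
    by metis
  define U where "U = (\<Union>T\<in>A. C T)"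
  define D where "D = sgn ` (U - {0})"
  have "(card_of D, card_of U) \<in> ordLeq"
    unfolding D_def using card_of_image card_of_mono1[of "U - {0}" U] ordLeq_transitive by blast
  moreover have "(card_of U, \<kappa>) \<in> ordLess"
    unfolding U_def using card_of_UN_countable_ordLess[OF \<kappa> A(3)] C(1) by blast
  ultimately have "(card_of D, \<kappa>) \<in> ordLess"
    using ordLeq_ordLess_trans by blast
  moreover have "D \<subseteq> sphere 0 1"
    unfolding D_def by (auto simp: norm_sgn split: if_splits)
  ultimately obtain x0 where x0: "x0 \<in> sphere 0 1"
    and x0_sq: "\<forall>d\<in>D. norm (d + x0) \<le> c \<and> norm (d - x0) \<le> c"
    using sq unfolding SQ_const_lt_def by blast
  have "norm (blinfun_apply T f + t *\<^sub>R x0) \<le> c"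
    if T: "T \<in> A" and "norm f \<le> 1" "\<bar>t\<bar> \<le> 1" for T f t
  proof (rule norm_add_scaleR_le_closure[OF x0_sq[unfolded D_def]])
    have "norm T * norm f \<le> 1"
      using A(2)[OF T] \<open>norm f \<le> 1\<close> by (simp add: mult_le_one)
    then show "norm (blinfun_apply T f) \<le> 1"
      using norm_blinfun[of T f] by linarith
    show "blinfun_apply T f \<in> closure U"
      unfolding U_def using C(2)[OF T] closure_mono[of "C T" "\<Union>T\<in>A. C T"] T by blast
  qed (use x0 \<open>c \<ge> 1\<close> \<open>\<bar>t\<bar> \<le> 1\<close> in auto)
  then show ?thesis
    using x0 by blast
qed

theorem SQ_const_lt_inj_tensor:
  assumes \<kappa>: "(natLeq, \<kappa>) \<in> ordLess" and "c \<ge> 1" and "\<exists>y::'b. y \<noteq> 0"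
    and sq: "SQ_const_lt \<kappa> c (UNIV :: 'a set)"
  shows "SQ_const_lt \<kappa> c (inj_tensor TYPE('a::real_normed_vector) TYPE('b::real_normed_vector))"
  unfolding SQ_const_lt_def
proof (intro allI impI)
  fix A assume A: "A \<subseteq> inj_tensor TYPE('a) TYPE('b) \<inter> sphere 0 1" "(card_of A, \<kappa>) \<in> ordLess"
  then have "A \<subseteq> closure {T. finite_rank T}" "\<And>T. T \<in> A \<Longrightarrow> norm T \<le> 1"
    unfolding inj_tensor_def by auto
  then obtain x0 where x0: "x0 \<in> sphere 0 1"
    and bound: "\<forall>T\<in>A. \<forall>f t. norm f \<le> 1 \<longrightarrow> \<bar>t\<bar> \<le> 1 \<longrightarrow>
                  norm (blinfun_apply T f + t *\<^sub>R x0) \<le> c"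
    using SQ_const_lt_square_vector_ranges[OF \<kappa> sq \<open>c \<ge> 1\<close> _ _ A(2)] by blast
  obtain y :: 'b where "y \<noteq> 0"
    using assms(3) by blast
  define y0 where "y0 = y /\<^sub>R norm y"
  have y0: "norm y0 = 1"
    using \<open>y \<noteq> 0\<close> unfolding y0_def by simp
  define E where "E = elementary_tensor x0 y0"
  have E: "E \<in> inj_tensor TYPE('a) TYPE('b) \<inter> sphere 0 1"
    using elementary_tensor_in_inj_tensor[of x0 y0] norm_elementary_tensor[of x0 y0] x0 y0
    unfolding E_def by simp
  have pm: "norm (T + s *\<^sub>R E) \<le> c" if "T \<in> A" "\<bar>s\<bar> \<le> 1" for T s
  proof (rule norm_blinfun_bound_unit)
    fix f :: "'b \<Rightarrow>\<^sub>L real" assume f: "norm f \<le> 1"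
    have "\<bar>blinfun_apply f y0\<bar> \<le> 1"
      using norm_blinfun[of f y0] f y0 by simp
    then have "\<bar>s * blinfun_apply f y0\<bar> \<le> 1"
      using \<open>\<bar>s\<bar> \<le> 1\<close> by (simp add: abs_mult mult_le_one)
    then show "norm (blinfun_apply (T + s *\<^sub>R E) f) \<le> c"
      using bound \<open>T \<in> A\<close> f by (simp add: E_def blinfun.add_left blinfun.scaleR_left)
  qed (use \<open>c \<ge> 1\<close> in simp)
  show "\<exists>y\<in>inj_tensor TYPE('a) TYPE('b) \<inter> sphere 0 1. \<forall>T\<in>A. norm (T + y) \<le> c \<and> norm (T - y) \<le> c"
    using E pm[of _ 1] pm[of _ "- 1"] by (intro bexI[of _ E]) auto
qed

theorem corollary4p7:
  fixes \<kappa> :: "'c rel"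
  assumes "Card_order \<kappa>" and "(natLeq, \<kappa>) \<in> ordLess"
    and "\<exists>x::'a::banach. x \<noteq> 0" and "\<exists>y::'b::banach. y \<noteq> 0"
  shows "(ASQ_lt \<kappa> (UNIV :: 'a set) \<longrightarrow> ASQ_lt \<kappa> (inj_tensor TYPE('a) TYPE('b)))
       \<and> (SQ_lt \<kappa> (UNIV :: 'a set) \<longrightarrow> SQ_lt \<kappa> (inj_tensor TYPE('a) TYPE('b)))"
proof -
  have "SQ_const_lt \<kappa> c (inj_tensor TYPE('a) TYPE('b))"
    if "c \<ge> 1" "SQ_const_lt \<kappa> c (UNIV :: 'a set)" for c
    using SQ_const_lt_inj_tensor[OF assms(2) that(1) assms(4) that(2)] .
  then show ?thesis
    unfolding ASQ_lt_iff_SQ_const_lt SQ_lt_iff_SQ_const_lt by simp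
qed

end
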